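(* Let $A\in\mathbb{R}^{n\times n}$, $\bm{u},\bm{v},\bm{g}\in\mathbb{R}^n$ with $\bm{g}-A\bm{u}\ne0$ and $\bm{v}\ne0$. Perform $m$ Arnoldi steps for $A$ with starting vector $\bm{g}-A\bm{u}$, giving $V_m^{(\psi)},\bm{v}_{m+1}^{(\psi)},H_m^{(\psi)},h_{m+1,m}^{(\psi)}\ge0$ with $AV_m^{(\psi)}=V_m^{(\psi)}H_m^{(\psi)}+h^{(\psi)}_{m+1,m}\bm{v}^{(\psi)}_{m+1}\bm{e}_m^T$, and $m$ Arnoldi steps for $A$ with starting vector $\bm{v}$, giving $V_m^{(\sigma)},\bm{v}_{m+1}^{(\sigma)},H_m^{(\sigma)},h_{m+1,m}^{(\sigma)}\ge0$ analogously. Let $u^{(\psi)}$ solve $u''=-H_m^{(\psi)}u+\|\bm{g}-A\bm{u}\|\bm{e}_1$, $u(0)=u'(0)=0$, and $u^{(\sigma)}$ solve $u''=-H_m^{(\sigma)}u$, $u(0)=0$, $u'(0)=\|\bm{v}\|\bm{e}_1$, and set $\bm{y}_m(t)=\bm{u}+V_m^{(\psi)}u^{(\psi)}(t)+V_m^{(\sigma)}u^{(\sigma)}(t)$ and $\bm{r}_m(t)=-A\bm{y}_m(t)+\bm{g}-\bm{y}_m''(t)$. Then for all $t\ge0$, $$\|\bm{r}_m(t)\|\le h^{(\psi)}_{m+1,m}\,t\varphi(-t\hat\omega^{(\psi)})\|\bm{g}-A\bm{u}\|+h^{(\sigma)}_{m+1,m}\,t\varphi(-t\hat\omega^{(\sigma)})\|\bm{v}\|\le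 t\varphi(-t\hat\omega)\big(h^{(\psi)}_{m+1,m}\|\bm{g}-A\bm{u}\|+h^{(\sigma)}_{m+1,m}\|\bm{v}\|\big),$$ where $\hat\omega^{(\psi)}=-\tfrac12\|H_m^{(\psi)}-I\|$, $\hat\omega^{(\sigma)}=-\tfrac12\|H_m^{(\sigma)}-I\|$, $\hat\omega=\min\{\hat\omega^{(\psi)},\hat\omega^{(\sigma)}\}$. In particular, for every $\varepsilon>0$ there is $\delta>0$ with $\|\bm{r}_m(t)\|\le\varepsilon$ for $t\in[0,\delta]$.
   Context: $\varphi(z)=(e^z-1)/z$ with $\varphi(0)=1$. The Arnoldi process with $m$ steps for $A$ and a nonzero starting vector $\bm{w}$ yields $V_m$ with orthonormal columns, first column $\bm{w}/\|\bm{w}\|$, a unit vector $\bm{v}_{m+1}$ orthogonal to the columns of $V_m$, $H_m=V_m^TAV_m$ (upper Hessenberg) and $h_{m+1,m}\ge0$ with $AV_m=V_mH_m+h_{m+1,m}\bm{v}_{m+1}\bm{e}_m^T$. $\|\cdot\|$ is the Euclidean / spectral norm, $\bm{e}_j$ canonical unit vectors. *)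

theory Defs
  imports "HOL-Analysis.Analysis"
begin

text \<open>Vectors in R^n are functions nat => real, meaningful on indices 0..n-1;
  n x m matrices are functions nat => nat => real, meaningful on 0..n-1 x 0..m-1.
  Indices are 0-based: e_1 is index 0 and e_m is index m-1.\<close>

definition phi :: "real \<Rightarrow> real" where
  "phi z = (if z = 0 then 1 else (exp z - 1) / z)"

definition vnorm :: "nat \<Rightarrow> (nat \<Rightarrow> real) \<Rightarrow> real" where
  "vnorm n x = sqrt (\<Sum>i<n. (x i)\<^sup>2)"

definition mat_vec :: "nat \<Rightarrow> (nat \<Rightarrow> nat \<Rightarrow> real) \<Rightarrow> (nat \<Rightarrow> real) \<Rightarrow> (nat \<Rightarrow> real)" where
  "mat_vec c M x = (\<lambda>i. \<Sum>j<c. M i j * x j)"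

definition opnorm :: "nat \<Rightarrow> nat \<Rightarrow> (nat \<Rightarrow> nat \<Rightarrow> real) \<Rightarrow> real" where
  "opnorm r c M = Sup {vnorm r (mat_vec c M x) | x. vnorm c x \<le> 1}"

definition idmat :: "nat \<Rightarrow> nat \<Rightarrow> real" where
  "idmat i j = (if i = j then 1 else 0)"

text \<open>Output (V_m, v_{m+1}, H_m, h_{m+1,m}) of m Arnoldi steps for A (n x n) with
  starting vector w, as described in the context.\<close>
definition arnoldi ::
  "nat \<Rightarrow> nat \<Rightarrow> (nat \<Rightarrow> nat \<Rightarrow> real) \<Rightarrow> (nat \<Rightarrow> real) \<Rightarrow>
   (nat \<Rightarrow> nat \<Rightarrow> real) \<Rightarrow> (nat \<Rightarrow> real) \<Rightarrow> (nat \<Rightarrow> nat \<Rightarrow> real) \<Rightarrow> real \<Rightarrow> bool" where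
  "arnoldi n m A w V v H h \<longleftrightarrow>
     (\<forall>i<m. \<forall>j<m. (\<Sum>k<n. V k i * V k j) = idmat i j) \<and>
     (\<forall>k<n. V k 0 = w k / vnorm n w) \<and>
     vnorm n v = 1 \<and>
     (\<forall>j<m. (\<Sum>k<n. V k j * v k) = 0) \<and>
     (\<forall>i<m. \<forall>j<m. H i j = (\<Sum>k<n. \<Sum>l<n. V k i * A k l * V l j)) \<and>
     (\<forall>i<m. \<forall>j<m. j + 1 < i \<longrightarrow> H i j = 0) \<and>
     h \<ge> 0 \<and>
     (\<forall>k<n. \<forall>j<m. (\<Sum>l<n. A k l * V l j) =
         (\<Sum>i<m. V k i * H i j) + h * v k * (if j = m - 1 then 1 else 0))"

text \<open>u (components u 0, ..., u (m-1), each a function of t) solves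
  u'' = -H u + f on all of R with u(0) = u0, u'(0) = u1.\<close>
definition solves2 ::
  "nat \<Rightarrow> (nat \<Rightarrow> nat \<Rightarrow> real) \<Rightarrow> (nat \<Rightarrow> real) \<Rightarrow> (nat \<Rightarrow> real) \<Rightarrow> (nat \<Rightarrow> real) \<Rightarrow>
   (nat \<Rightarrow> real \<Rightarrow> real) \<Rightarrow> bool" where
  "solves2 m H f u0 u1 u \<longleftrightarrow>
     (\<exists>u'. (\<forall>i<m. \<forall>t. (u i has_real_derivative u' i t) (at t) \<and>
              (u' i has_real_derivative (- (\<Sum>j<m. H i j * u j t) + f i)) (at t)) \<and>
           (\<forall>i<m. u i 0 = u0 i \<and> u' i 0 = u1 i))"

end

theory Submission
  imports Defs
begin

text \<open>
  The Arnoldi relation \<open>A V = V H + h v e\<^sub>m\<^sup>T\<close>, the projected equations and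
  \<open>V (\<parallel>g - A u\<parallel> e\<^sub>1) = g - A u\<close> cancel everything in the residual except the terms
  \<open>- h u\<^sub>m(t) v\<close> of the two Krylov spaces, so only the last components of the projected
  solutions must be bounded. For \<open>u'' = - H u + f\<close> the energy \<open>E = |u|\<^sup>2 + |u'|\<^sup>2\<close> satisfies
  \<open>E' = 2 u'\<^sup>T (f - (H - I) u) \<le> \<parallel>H - I\<parallel> E + 2 |f| \<surd>E\<close>; comparing \<open>\<surd>E\<close> with the solution of
  the linear equation \<open>N' = - \<omega> N + |f|\<close>, where \<open>\<omega> = - \<parallel>H - I\<parallel> / 2\<close>, gives
  \<open>\<surd>E(t) \<le> exp (- \<omega> t) \<surd>E(0) + |f| t \<phi>(- t \<omega>)\<close>. With zero initial data this bounds the first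
  solution directly; for the second it bounds the velocity by \<open>exp (- \<omega> t) \<parallel>v\<parallel>\<close>, whose integral
  is \<open>t \<phi>(- t \<omega>) \<parallel>v\<parallel>\<close>. Finally \<open>t \<phi>(- t \<omega>) = \<integral>\<^sub>0\<^sup>t exp (- \<omega> s) ds\<close> decreases in \<open>\<omega>\<close> and
  vanishes at \<open>t = 0\<close>.
\<close>

section \<open>Euclidean and operator norms\<close>

lemma vnorm_eq_L2_set: "vnorm n x = L2_set x {..<n}"
  by (simp add: vnorm_def L2_set_def)

lemma vnorm_nonneg: "vnorm n x \<ge> 0"
  by (simp add: vnorm_def sum_nonneg)

lemma vnorm_power2: "(vnorm n x)\<^sup>2 = (\<Sum>i<n. (x i)\<^sup>2)"
  by (simp add: vnorm_def sum_nonneg)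

lemma abs_le_vnorm: "i < n \<Longrightarrow> \<bar>x i\<bar> \<le> vnorm n x"
  unfolding vnorm_def by (rule real_le_rsqrt) (auto intro: member_le_sum)

lemma vnorm_eq_0D: "vnorm n x = 0 \<Longrightarrow> i < n \<Longrightarrow> x i = 0"
  using abs_le_vnorm[of i n x] by simp

lemma sum_mult_le_vnorm: "(\<Sum>i<n. a i * b i) \<le> vnorm n a * vnorm n b"
proof -
  have "(\<Sum>i<n. a i * b i) \<le> (\<Sum>i<n. \<bar>a i\<bar> * \<bar>b i\<bar>)"
    by (rule sum_mono) (metis abs_ge_self abs_mult)
  also have "\<dots> \<le> vnorm n a * vnorm n b"
    unfolding vnorm_eq_L2_set by (rule L2_set_mult_ineq)
  finally show ?thesis .
qed

lemma vnorm_add_le: "vnorm n (\<lambda>k. x k + y k) \<le> vnorm n x + vnorm n y"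
  unfolding vnorm_eq_L2_set by (rule L2_set_triangle_ineq)

lemma vnorm_scale: "vnorm n (\<lambda>k. c * x k) = \<bar>c\<bar> * vnorm n x"
  by (simp add: vnorm_def power_mult_distrib sum_distrib_left[symmetric] real_sqrt_mult)

lemma vnorm_lincomb_le:
  assumes "vnorm n x = 1" "vnorm n y = 1"
  shows "vnorm n (\<lambda>k. a * x k + b * y k) \<le> \<bar>a\<bar> + \<bar>b\<bar>"
  using vnorm_add_le[of n "\<lambda>k. a * x k" "\<lambda>k. b * y k"] assms by (simp add: vnorm_scale)

lemma vnorm_cong: "(\<And>k. k < n \<Longrightarrow> x k = y k) \<Longrightarrow> vnorm n x = vnorm n y"
  unfolding vnorm_def by (intro arg_cong[where f=sqrt] sum.cong) auto

lemma vnorm_unit_vector: "1 \<le> m \<Longrightarrow> vnorm m (\<lambda>i. if i = 0 then b else 0) = \<bar>b\<bar>"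
proof -
  assume "1 \<le> m"
  have "(\<Sum>i<m. (if i = 0 then b else 0)\<^sup>2) = (\<Sum>i<m. if i = 0 then b\<^sup>2 else 0)"
    by (rule sum.cong) auto
  with \<open>1 \<le> m\<close> show ?thesis by (simp add: vnorm_def)
qed

lemma bdd_above_opnorm_set: "bdd_above {vnorm r (mat_vec c M x) | x. vnorm c x \<le> 1}"
proof (rule bdd_aboveI)
  fix z assume "z \<in> {vnorm r (mat_vec c M x) | x. vnorm c x \<le> 1}"
  then obtain x where z: "z = vnorm r (mat_vec c M x)" and x: "vnorm c x \<le> 1" by auto
  have "\<bar>M i j * x j\<bar> \<le> \<bar>M i j\<bar>" if "j < c" for i j
    using abs_le_vnorm[OF that, of x] x by (simp add: abs_mult mult_left_le)
  then have "\<bar>mat_vec c M x i\<bar> \<le> (\<Sum>j<c. \<bar>M i j\<bar>)" for i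
    unfolding mat_vec_def by (intro order_trans[OF sum_abs] sum_mono) auto
  then have "(\<Sum>i<r. \<bar>mat_vec c M x i\<bar>) \<le> (\<Sum>i<r. \<Sum>j<c. \<bar>M i j\<bar>)"
    by (intro sum_mono)
  moreover have "z \<le> (\<Sum>i<r. \<bar>mat_vec c M x i\<bar>)"
    unfolding z vnorm_eq_L2_set by (rule L2_set_le_sum_abs)
  ultimately show "z \<le> (\<Sum>i<r. \<Sum>j<c. \<bar>M i j\<bar>)" by linarith
qed

lemma vnorm_mat_vec_le_opnorm: "vnorm c x \<le> 1 \<Longrightarrow> vnorm r (mat_vec c M x) \<le> opnorm r c M"
  unfolding opnorm_def by (rule cSup_upper[OF _ bdd_above_opnorm_set]) auto

lemma opnorm_nonneg: "opnorm r c M \<ge> 0"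
proof -
  have "vnorm c (\<lambda>_. 0) \<le> 1" by (simp add: vnorm_def)
  then show ?thesis
    using vnorm_mat_vec_le_opnorm vnorm_nonneg order_trans by blast
qed

lemma mat_vec_scale: "mat_vec c M (\<lambda>k. a * x k) = (\<lambda>i. a * mat_vec c M x i)"
  unfolding mat_vec_def by (simp add: sum_distrib_left mult.left_commute)

lemma vnorm_mat_vec_le: "vnorm r (mat_vec c M x) \<le> opnorm r c M * vnorm c x"
proof (cases "vnorm c x = 0")
  case True
  then have "mat_vec c M x = (\<lambda>i. 0)"
    by (auto simp: mat_vec_def vnorm_eq_0D intro!: sum.neutral)
  then show ?thesis using True by (simp add: vnorm_def)
next
  case False
  define s where "s = vnorm c x"
  have s: "s > 0" using False vnorm_nonneg[of c x] unfolding s_def by linarith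
  have "vnorm c (\<lambda>k. (1/s) * x k) = \<bar>1/s\<bar> * s"
    unfolding s_def by (rule vnorm_scale)
  then have "vnorm c (\<lambda>k. (1/s) * x k) = 1"
    using s by simp
  then have "vnorm r (mat_vec c M (\<lambda>k. (1/s) * x k)) \<le> opnorm r c M"
    by (intro vnorm_mat_vec_le_opnorm) simp
  then have "\<bar>1/s\<bar> * vnorm r (mat_vec c M x) \<le> opnorm r c M"
    by (simp only: mat_vec_scale vnorm_scale)
  then have "vnorm r (mat_vec c M x) / s \<le> opnorm r c M"
    using s by simp
  then show ?thesis using s by (simp add: s_def divide_le_eq mult.commute)
qed

section \<open>Differential inequalities and the function \<open>t \<phi>(c t)\<close>\<close>

lemma le_by_derivative_le:
  fixes f g f' g' :: "real \<Rightarrow> real"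
  assumes "0 \<le> t" "f 0 \<le> g 0"
    and "\<And>x. 0 \<le> x \<Longrightarrow> x \<le> t \<Longrightarrow> (f has_real_derivative f' x) (at x)"
    and "\<And>x. 0 \<le> x \<Longrightarrow> x \<le> t \<Longrightarrow> (g has_real_derivative g' x) (at x)"
    and "\<And>x. 0 \<le> x \<Longrightarrow> x \<le> t \<Longrightarrow> f' x \<le> g' x"
  shows "f t \<le> g t"
proof -
  have "(\<lambda>s. g s - f s) 0 \<le> (\<lambda>s. g s - f s) t"
  proof (rule DERIV_nonneg_imp_nondecreasing[OF \<open>0 \<le> t\<close>])
    fix x assume "0 \<le> x" "x \<le> t"
    with assms(3-5) show "\<exists>y. ((\<lambda>s. g s - f s) has_real_derivative y) (at x) \<and> 0 \<le> y"
      by (intro exI[of _ "g' x - f' x"]) (auto intro: DERIV_diff)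
  qed
  with \<open>f 0 \<le> g 0\<close> show ?thesis by simp
qed

lemma abs_le_by_derivative_le:
  fixes f g f' g' :: "real \<Rightarrow> real"
  assumes "0 \<le> t" "f 0 = 0" "g 0 = 0"
    and "\<And>x. 0 \<le> x \<Longrightarrow> x \<le> t \<Longrightarrow> (f has_real_derivative f' x) (at x)"
    and "\<And>x. 0 \<le> x \<Longrightarrow> x \<le> t \<Longrightarrow> (g has_real_derivative g' x) (at x)"
    and "\<And>x. 0 \<le> x \<Longrightarrow> x \<le> t \<Longrightarrow> \<bar>f' x\<bar> \<le> g' x"
  shows "\<bar>f t\<bar> \<le> g t"
proof -
  have "f t \<le> g t"
    by (rule le_by_derivative_le[where f'=f' and g'=g']) (use assms in \<open>auto simp: abs_le_iff\<close>)
  moreover have "- f t \<le> g t"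
    by (rule le_by_derivative_le[where f="\<lambda>s. - f s" and f'="\<lambda>x. - f' x" and g'=g'])
       (use assms in \<open>auto simp: abs_le_iff intro: DERIV_minus\<close>)
  ultimately show ?thesis by simp
qed

lemma t_phi_eq: "c \<noteq> 0 \<Longrightarrow> t * phi (c * t) = (exp (c * t) - 1) / c"
  by (cases "t = 0") (auto simp: phi_def field_simps)

lemma mult_t_phi: "c * (t * phi (c * t)) = exp (c * t) - 1"
  by (cases "c = 0") (auto simp: t_phi_eq)

lemma has_real_derivative_t_phi: "((\<lambda>t. t * phi (c * t)) has_real_derivative exp (c * t)) (at t)"
proof (cases "c = 0")
  case True
  then show ?thesis by (simp add: phi_def)
next
  case False
  have "((\<lambda>t. (exp (c * t) - 1) / c) has_real_derivative exp (c * t)) (at t)"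
    using False by (auto intro!: derivative_eq_intros)
  then show ?thesis using False by (simp add: t_phi_eq)
qed

lemma t_phi_mono:
  assumes "c1 \<le> c2" "0 \<le> t"
  shows "t * phi (c1 * t) \<le> t * phi (c2 * t)"
  by (rule le_by_derivative_le[OF \<open>0 \<le> t\<close> _ has_real_derivative_t_phi has_real_derivative_t_phi])
     (use assms(1) in \<open>auto intro: mult_right_mono\<close>)

lemma t_phi_le_t_exp:
  assumes "0 \<le> c" "0 \<le> t"
  shows "t * phi (c * t) \<le> t * exp (c * t)"
proof (rule le_by_derivative_le[OF \<open>0 \<le> t\<close> _ has_real_derivative_t_phi])
  show "((\<lambda>s. s * exp (c * s)) has_real_derivative exp (c * x) + x * (exp (c * x) * c)) (at x)" for x
    by (auto intro!: derivative_eq_intros)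
qed (use assms in auto)

lemma t_phi_weighted_sum_le:
  assumes "0 \<le> a" "0 \<le> b" "0 \<le> t"
  shows "a * (t * phi (- t * w1)) + b * (t * phi (- t * w2)) \<le> t * phi (- t * min w1 w2) * (a + b)"
proof -
  have K1: "t * phi (- t * w1) \<le> t * phi (- t * min w1 w2)"
    and K2: "t * phi (- t * w2) \<le> t * phi (- t * min w1 w2)"
    using t_phi_mono[of "- w1" "- min w1 w2" t] t_phi_mono[of "- w2" "- min w1 w2" t] assms(3)
    by (simp_all add: mult.commute)
  then have "a * (t * phi (- t * w1)) + b * (t * phi (- t * w2))
      \<le> a * (t * phi (- t * min w1 w2)) + b * (t * phi (- t * min w1 w2))"
    using assms(1,2) by (intro add_mono mult_left_mono[OF K1] mult_left_mono[OF K2])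
  then show ?thesis by (simp add: algebra_simps)
qed

lemma small_near_zero_if_le_t_phi:
  fixes N :: "real \<Rightarrow> real"
  assumes "0 \<le> c" "0 \<le> C" "\<And>t. 0 \<le> t \<Longrightarrow> N t \<le> t * phi (c * t) * C"
  shows "\<forall>\<epsilon>>0. \<exists>\<delta>>0. \<forall>t\<in>{0..\<delta>}. N t \<le> \<epsilon>"
proof (intro allI impI)
  fix \<epsilon> :: real assume "\<epsilon> > 0"
  define D where "D = C * exp c + 1"
  have "D > 0" using assms(2) by (simp add: D_def add_nonneg_pos)
  define \<delta> where "\<delta> = min 1 (\<epsilon> / D)"
  have "N t \<le> \<epsilon>" if t: "0 \<le> t" "t \<le> \<delta>" for t
  proof -
    have "N t \<le> t * phi (c * t) * C" using assms(3) t by simp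
    also have "\<dots> \<le> t * exp (c * t) * C"
      using t_phi_le_t_exp[OF assms(1) t(1)] assms(2) by (rule mult_right_mono)
    also have "\<dots> \<le> t * exp c * C"
    proof -
      have "exp (c * t) \<le> exp c" using assms(1) t \<open>\<epsilon> > 0\<close> by (simp add: \<delta>_def mult_left_le)
      then show ?thesis using t(1) assms(2) by (intro mult_right_mono mult_left_mono) auto
    qed
    also have "\<dots> \<le> t * D" using t(1) by (simp add: D_def algebra_simps)
    also have "\<dots> \<le> \<epsilon>"
      using t \<open>D > 0\<close> by (simp add: \<delta>_def le_divide_eq mult.commute)
    finally show ?thesis .
  qed
  moreover have "\<delta> > 0" using \<open>\<epsilon> > 0\<close> \<open>D > 0\<close> by (simp add: \<delta>_def)
  ultimately show "\<exists>\<delta>>0. \<forall>t\<in>{0..\<delta>}. N t \<le> \<epsilon>" by auto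
qed

lemma linear_growth_bound:
  fixes N N' :: "real \<Rightarrow> real"
  assumes dN: "\<And>s. (N has_real_derivative N' s) (at s)"
    and rate: "\<And>s. N' s \<le> c * N s + \<beta>"
    and "0 \<le> t"
  shows "N t \<le> exp (c * t) * N 0 + \<beta> * (t * phi (c * t))"
proof -
  define q where "q s = exp (- c * s) * (N s - \<beta> * (s * phi (c * s)))" for s
  have "q t \<le> q 0"
  proof (rule DERIV_nonpos_imp_nonincreasing[OF \<open>0 \<le> t\<close>])
    fix s
    have "(q has_real_derivative
            exp (- c * s) * (N' s - \<beta> * exp (c * s))
            + exp (- c * s) * (- c) * (N s - \<beta> * (s * phi (c * s)))) (at s)"
      unfolding q_def
    proof (rule DERIV_mult')
      show "((\<lambda>s. exp (- c * s)) has_real_derivative exp (- c * s) * (- c)) (at s)"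
        by (auto intro!: derivative_eq_intros)
    qed (intro DERIV_diff DERIV_cmult dN has_real_derivative_t_phi)
    then have "(q has_real_derivative exp (- c * s) * (N' s - c * N s - \<beta>)) (at s)"
    proof (rule DERIV_cong)
      have "exp (c * s) = 1 + c * (s * phi (c * s))" by (simp add: mult_t_phi)
      then show "exp (- c * s) * (N' s - \<beta> * exp (c * s))
            + exp (- c * s) * (- c) * (N s - \<beta> * (s * phi (c * s)))
          = exp (- c * s) * (N' s - c * N s - \<beta>)"
        by (simp add: algebra_simps)
    qed
    moreover have "exp (- c * s) * (N' s - c * N s - \<beta>) \<le> 0"
      using rate[of s] by (simp add: mult_nonneg_nonpos)
    ultimately show "\<exists>y. (q has_real_derivative y) (at s) \<and> y \<le> 0" by blast
  qed
  then have "exp (c * t) * q t \<le> exp (c * t) * N 0"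
    by (simp add: q_def)
  moreover have "exp (c * t) * q t = N t - \<beta> * (t * phi (c * t))"
    by (simp add: q_def mult.assoc[symmetric] exp_add[symmetric])
  ultimately show ?thesis by simp
qed

text \<open>The shift by \<open>\<delta> > 0\<close> keeps \<open>sqrt (E s + \<delta>)\<close> differentiable where \<open>E\<close> vanishes.\<close>

lemma sqrt_shift_growth_bound:
  fixes E E' :: "real \<Rightarrow> real"
  assumes dE: "\<And>s. (E has_real_derivative E' s) (at s)"
    and E_nonneg: "\<And>s. 0 \<le> E s"
    and rate: "\<And>s. E' s \<le> 2 * c * E s + 2 * \<beta> * sqrt (E s)"
    and "0 \<le> c" "0 \<le> \<beta>" "0 < \<delta>" "0 \<le> t"
  shows "sqrt (E t + \<delta>) \<le> exp (c * t) * sqrt (E 0 + \<delta>) + \<beta> * (t * phi (c * t))"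
proof (rule linear_growth_bound[where N="\<lambda>s. sqrt (E s + \<delta>)"
    and N'="\<lambda>s. E' s / (2 * sqrt (E s + \<delta>))"])
  show "((\<lambda>s. sqrt (E s + \<delta>)) has_real_derivative E' s / (2 * sqrt (E s + \<delta>))) (at s)" for s
  proof -
    have "((\<lambda>s. sqrt (E s + \<delta>)) has_real_derivative inverse (sqrt (E s + \<delta>)) / 2 * E' s) (at s)"
      by (rule DERIV_chain2[OF DERIV_real_sqrt])
         (use E_nonneg[of s] \<open>0 < \<delta>\<close> in \<open>auto intro!: derivative_eq_intros dE\<close>)
    then show ?thesis by (simp add: field_simps)
  qed
  show "E' s / (2 * sqrt (E s + \<delta>)) \<le> c * sqrt (E s + \<delta>) + \<beta>" for s
  proof -
    define N where "N = sqrt (E s + \<delta>)"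
    have "0 < N" unfolding N_def using E_nonneg[of s] \<open>0 < \<delta>\<close> by simp
    have "c * E s \<le> c * N\<^sup>2" and "\<beta> * sqrt (E s) \<le> \<beta> * N"
      unfolding N_def using E_nonneg[of s] assms(4-6) by (auto intro: mult_left_mono)
    then have "E' s \<le> 2 * N * (c * N + \<beta>)"
      using rate[of s] by (simp add: algebra_simps power2_eq_square)
    then show ?thesis
      using \<open>0 < N\<close> by (simp add: N_def[symmetric] divide_le_eq mult.commute)
  qed
qed (rule \<open>0 \<le> t\<close>)

lemma sqrt_growth_bound:
  fixes E E' :: "real \<Rightarrow> real"
  assumes "\<And>s. (E has_real_derivative E' s) (at s)"
    and "\<And>s. 0 \<le> E s"
    and "\<And>s. E' s \<le> 2 * c * E s + 2 * \<beta> * sqrt (E s)"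
    and "0 \<le> c" "0 \<le> \<beta>" "0 \<le> t"
  shows "sqrt (E t) \<le> exp (c * t) * sqrt (E 0) + \<beta> * (t * phi (c * t))"
proof (rule field_le_epsilon)
  fix e :: real assume "0 < e"
  define \<delta> where "\<delta> = (e / exp (c * t))\<^sup>2"
  have "0 < \<delta>" using \<open>0 < e\<close> by (simp add: \<delta>_def)
  have "sqrt (E t) \<le> sqrt (E t + \<delta>)" using \<open>0 < \<delta>\<close> by simp
  also have "\<dots> \<le> exp (c * t) * sqrt (E 0 + \<delta>) + \<beta> * (t * phi (c * t))"
    by (rule sqrt_shift_growth_bound) (use assms \<open>0 < \<delta>\<close> in auto)
  also have "\<dots> \<le> exp (c * t) * (sqrt (E 0) + sqrt \<delta>) + \<beta> * (t * phi (c * t))"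
    using assms(2)[of 0] \<open>0 < \<delta>\<close> by (simp add: sqrt_add_le_add_sqrt)
  also have "\<dots> = exp (c * t) * sqrt (E 0) + \<beta> * (t * phi (c * t)) + e"
    using \<open>0 < e\<close> by (simp add: \<delta>_def distrib_left)
  finally show "sqrt (E t) \<le> exp (c * t) * sqrt (E 0) + \<beta> * (t * phi (c * t)) + e" .
qed

section \<open>Energy estimate for \<open>u'' = - H u + f\<close>\<close>

definition omega_hat :: "nat \<Rightarrow> (nat \<Rightarrow> nat \<Rightarrow> real) \<Rightarrow> real" where
  "omega_hat m H = - (1/2) * opnorm m m (\<lambda>i j. H i j - idmat i j)"

lemma omega_hat_nonpos: "omega_hat m H \<le> 0"
  by (simp add: omega_hat_def opnorm_nonneg)

lemma mat_vec_minus_idmat: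
  assumes "i < m"
  shows "mat_vec m (\<lambda>i j. H i j - idmat i j) b i = (\<Sum>j<m. H i j * b j) - b i"
proof -
  have "(\<Sum>j<m. idmat i j * b j) = (\<Sum>j<m. if i = j then b j else 0)"
    by (rule sum.cong) (auto simp: idmat_def)
  then show ?thesis using assms by (simp add: mat_vec_def left_diff_distrib sum_subtractf)
qed

lemma energy_rate_le:
  assumes "vnorm m f \<le> \<beta>"
  shows "(\<Sum>i<m. 2 * b i * a i + 2 * a i * (- (\<Sum>j<m. H i j * b j) + f i))
    \<le> opnorm m m (\<lambda>i j. H i j - idmat i j) * (\<Sum>i<m. (b i)\<^sup>2 + (a i)\<^sup>2)
      + 2 * \<beta> * sqrt (\<Sum>i<m. (b i)\<^sup>2 + (a i)\<^sup>2)"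
proof -
  define M where "M = (\<lambda>i j. H i j - idmat i j)"
  have E: "(\<Sum>i<m. (b i)\<^sup>2 + (a i)\<^sup>2) = (vnorm m a)\<^sup>2 + (vnorm m b)\<^sup>2"
    by (simp add: vnorm_power2 sum.distrib)
  have "(\<Sum>i<m. 2 * b i * a i + 2 * a i * (- (\<Sum>j<m. H i j * b j) + f i))
      = (\<Sum>i<m. 2 * ((- a i) * mat_vec m M b i) + 2 * (a i * f i))"
    by (rule sum.cong) (simp_all add: M_def mat_vec_minus_idmat algebra_simps)
  also have "\<dots> = 2 * (\<Sum>i<m. (- a i) * mat_vec m M b i) + 2 * (\<Sum>i<m. a i * f i)"
    by (simp only: sum.distrib sum_distrib_left)
  also have "\<dots> \<le> 2 * (vnorm m a * (opnorm m m M * vnorm m b)) + 2 * (vnorm m a * \<beta>)"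
  proof -
    have "(\<Sum>i<m. (- a i) * mat_vec m M b i) \<le> vnorm m a * vnorm m (mat_vec m M b)"
      using sum_mult_le_vnorm[where n=m and a="\<lambda>i. - a i" and b="mat_vec m M b"]
      by (simp add: vnorm_scale[of m "-1" a, simplified])
    also have "\<dots> \<le> vnorm m a * (opnorm m m M * vnorm m b)"
      by (intro mult_left_mono vnorm_mat_vec_le vnorm_nonneg)
    finally have "(\<Sum>i<m. (- a i) * mat_vec m M b i) \<le> vnorm m a * (opnorm m m M * vnorm m b)" .
    moreover have "(\<Sum>i<m. a i * f i) \<le> vnorm m a * \<beta>"
      using sum_mult_le_vnorm[where n=m and a=a and b=f] mult_left_mono[OF assms vnorm_nonneg[of m a]]
      by linarith
    ultimately show ?thesis by linarith
  qed
  also have "\<dots> \<le> opnorm m m M * ((vnorm m a)\<^sup>2 + (vnorm m b)\<^sup>2)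
      + 2 * \<beta> * sqrt ((vnorm m a)\<^sup>2 + (vnorm m b)\<^sup>2)"
  proof -
    have "2 * (vnorm m a * vnorm m b) \<le> (vnorm m a)\<^sup>2 + (vnorm m b)\<^sup>2"
      using sum_squares_bound[of "vnorm m a" "vnorm m b"] by (simp add: power2_eq_square)
    then have "opnorm m m M * (2 * (vnorm m a * vnorm m b))
        \<le> opnorm m m M * ((vnorm m a)\<^sup>2 + (vnorm m b)\<^sup>2)"
      by (intro mult_left_mono opnorm_nonneg)
    moreover have "vnorm m a \<le> sqrt ((vnorm m a)\<^sup>2 + (vnorm m b)\<^sup>2)"
      by (intro real_le_rsqrt) simp
    then have "vnorm m a * \<beta> \<le> sqrt ((vnorm m a)\<^sup>2 + (vnorm m b)\<^sup>2) * \<beta>"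
      using assms vnorm_nonneg[of m f] by (intro mult_right_mono) auto
    ultimately show ?thesis by (simp add: algebra_simps)
  qed
  finally show ?thesis unfolding E M_def .
qed

lemma ode_energy_bound:
  fixes u u' :: "nat \<Rightarrow> real \<Rightarrow> real"
  assumes u': "\<And>i s. i < m \<Longrightarrow> (u i has_real_derivative u' i s) (at s)"
    and u'': "\<And>i s. i < m \<Longrightarrow> (u' i has_real_derivative - (\<Sum>j<m. H i j * u j s) + f i) (at s)"
    and "vnorm m f \<le> \<beta>" "0 \<le> t"
  shows "sqrt (\<Sum>i<m. (u i t)\<^sup>2 + (u' i t)\<^sup>2)
    \<le> exp (- omega_hat m H * t) * sqrt (\<Sum>i<m. (u i 0)\<^sup>2 + (u' i 0)\<^sup>2)
      + \<beta> * (t * phi (- omega_hat m H * t))"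
proof (rule sqrt_growth_bound[where E="\<lambda>s. \<Sum>i<m. (u i s)\<^sup>2 + (u' i s)\<^sup>2"])
  show "((\<lambda>s. \<Sum>i<m. (u i s)\<^sup>2 + (u' i s)\<^sup>2) has_real_derivative
      (\<Sum>i<m. 2 * u i s * u' i s + 2 * u' i s * (- (\<Sum>j<m. H i j * u j s) + f i))) (at s)" for s
    by (rule DERIV_sum) (auto intro!: derivative_eq_intros u' u'')
  show "(\<Sum>i<m. 2 * u i s * u' i s + 2 * u' i s * (- (\<Sum>j<m. H i j * u j s) + f i))
      \<le> 2 * - omega_hat m H * (\<Sum>i<m. (u i s)\<^sup>2 + (u' i s)\<^sup>2)
        + 2 * \<beta> * sqrt (\<Sum>i<m. (u i s)\<^sup>2 + (u' i s)\<^sup>2)" for s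
    using energy_rate_le[OF assms(3)] by (simp add: omega_hat_def)
qed (use assms(3,4) omega_hat_nonpos order_trans[OF vnorm_nonneg] in \<open>auto intro: sum_nonneg\<close>)

lemma abs_le_sqrt_sum_squares:
  fixes a b :: "nat \<Rightarrow> real"
  assumes "i < m"
  shows "\<bar>a i\<bar> \<le> sqrt (\<Sum>j<m. (a j)\<^sup>2 + (b j)\<^sup>2)" and "\<bar>b i\<bar> \<le> sqrt (\<Sum>j<m. (a j)\<^sup>2 + (b j)\<^sup>2)"
proof -
  have "(a i)\<^sup>2 + (b i)\<^sup>2 \<le> (\<Sum>j<m. (a j)\<^sup>2 + (b j)\<^sup>2)"
    using assms by (intro member_le_sum) auto
  then have "(a i)\<^sup>2 \<le> (\<Sum>j<m. (a j)\<^sup>2 + (b j)\<^sup>2)" "(b i)\<^sup>2 \<le> (\<Sum>j<m. (a j)\<^sup>2 + (b j)\<^sup>2)"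
    using zero_le_power2[of "a i"] zero_le_power2[of "b i"] by linarith+
  then show "\<bar>a i\<bar> \<le> sqrt (\<Sum>j<m. (a j)\<^sup>2 + (b j)\<^sup>2)" "\<bar>b i\<bar> \<le> sqrt (\<Sum>j<m. (a j)\<^sup>2 + (b j)\<^sup>2)"
    by (auto intro: real_le_rsqrt)
qed

lemma solves2_zero_init_bound:
  assumes "solves2 m H f (\<lambda>i. 0) (\<lambda>i. 0) u" "vnorm m f \<le> \<beta>" "i < m" "0 \<le> t"
  shows "\<bar>u i t\<bar> \<le> \<beta> * (t * phi (- omega_hat m H * t))"
proof -
  obtain u' where u': "\<And>i s. i < m \<Longrightarrow> (u i has_real_derivative u' i s) (at s)"
    and u'': "\<And>i s. i < m \<Longrightarrow> (u' i has_real_derivative - (\<Sum>j<m. H i j * u j s) + f i) (at s)"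
    and init: "\<And>i. i < m \<Longrightarrow> u i 0 = 0 \<and> u' i 0 = 0"
    using assms(1) unfolding solves2_def by blast
  have "\<bar>u i t\<bar> \<le> sqrt (\<Sum>i<m. (u i t)\<^sup>2 + (u' i t)\<^sup>2)"
    by (rule abs_le_sqrt_sum_squares(1)[OF assms(3)])
  also have "\<dots> \<le> exp (- omega_hat m H * t) * sqrt (\<Sum>i<m. (u i 0)\<^sup>2 + (u' i 0)\<^sup>2)
      + \<beta> * (t * phi (- omega_hat m H * t))"
    by (rule ode_energy_bound[OF u' u'' assms(2,4)])
  finally show ?thesis using init by simp
qed

lemma solves2_homogeneous_bound:
  assumes "solves2 m H (\<lambda>i. 0) (\<lambda>i. 0) u1 u" "i < m" "0 \<le> t"
  shows "\<bar>u i t\<bar> \<le> vnorm m u1 * (t * phi (- omega_hat m H * t))"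
proof -
  obtain u' where u': "\<And>i s. i < m \<Longrightarrow> (u i has_real_derivative u' i s) (at s)"
    and u'': "\<And>i s. i < m \<Longrightarrow> (u' i has_real_derivative - (\<Sum>j<m. H i j * u j s) + 0) (at s)"
    and init: "\<And>i. i < m \<Longrightarrow> u i 0 = 0 \<and> u' i 0 = u1 i"
    using assms(1) unfolding solves2_def by blast
  have E0: "sqrt (\<Sum>i<m. (u i 0)\<^sup>2 + (u' i 0)\<^sup>2) = vnorm m u1"
    unfolding vnorm_def using init by (intro arg_cong[where f=sqrt] sum.cong) auto
  \<comment> \<open>The energy bound controls the velocity; integrating it bounds the position.\<close>
  have velocity: "\<bar>u' i s\<bar> \<le> vnorm m u1 * exp (- omega_hat m H * s)" if "0 \<le> s" for s
  proof -
    have "\<bar>u' i s\<bar> \<le> sqrt (\<Sum>i<m. (u i s)\<^sup>2 + (u' i s)\<^sup>2)"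
      by (rule abs_le_sqrt_sum_squares(2)[OF assms(2)])
    also have "\<dots> \<le> exp (- omega_hat m H * s) * vnorm m u1 + 0 * (s * phi (- omega_hat m H * s))"
      using ode_energy_bound[OF u' u'' _ that, of 0] by (simp add: E0 vnorm_def)
    finally show ?thesis by (simp add: mult.commute)
  qed
  show ?thesis
  proof (rule abs_le_by_derivative_le[where f="u i" and f'="u' i"
        and g="\<lambda>s. vnorm m u1 * (s * phi (- omega_hat m H * s))"
        and g'="\<lambda>s. vnorm m u1 * exp (- omega_hat m H * s)"])
    show "((\<lambda>s. vnorm m u1 * (s * phi (- omega_hat m H * s))) has_real_derivative
        vnorm m u1 * exp (- omega_hat m H * x)) (at x)" for x
      by (intro DERIV_cmult has_real_derivative_t_phi)
  qed (use init u' velocity assms(2,3) in auto)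
qed

section \<open>The Arnoldi residual\<close>

lemma arnoldi_relation_mult_vec:
  assumes "arnoldi n m A w V v H h" "k < n" "1 \<le> m"
  shows "(\<Sum>l<n. A k l * (\<Sum>j<m. V l j * x j))
    = (\<Sum>i<m. V k i * (\<Sum>j<m. H i j * x j)) + h * v k * x (m - 1)"
proof -
  have AV: "(\<Sum>l<n. A k l * V l j) = (\<Sum>i<m. V k i * H i j) + h * v k * (if j = m - 1 then 1 else 0)"
    if "j < m" for j
    using assms(1,2) that unfolding arnoldi_def by blast
  have "(\<Sum>l<n. A k l * (\<Sum>j<m. V l j * x j)) = (\<Sum>l<n. \<Sum>j<m. A k l * V l j * x j)"
    by (simp add: sum_distrib_left mult.assoc)
  also have "\<dots> = (\<Sum>j<m. (\<Sum>l<n. A k l * V l j) * x j)"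
    by (subst sum.swap) (simp add: sum_distrib_right)
  also have "\<dots> = (\<Sum>j<m. (\<Sum>i<m. V k i * H i j) * x j + (if j = m - 1 then h * v k * x j else 0))"
    by (rule sum.cong) (simp_all add: AV distrib_right)
  also have "\<dots> = (\<Sum>j<m. \<Sum>i<m. V k i * H i j * x j) + h * v k * x (m - 1)"
    using assms(3) by (simp add: sum.distrib sum_distrib_right)
  also have "\<dots> = (\<Sum>i<m. V k i * (\<Sum>j<m. H i j * x j)) + h * v k * x (m - 1)"
    by (subst sum.swap) (simp add: sum_distrib_left mult.assoc)
  finally show ?thesis .
qed

lemma arnoldi_first_column:
  assumes "arnoldi n m A w V v H h" "k < n"
  shows "vnorm n w * V k 0 = w k"
  using assms vnorm_eq_0D[of n w k] unfolding arnoldi_def by auto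

lemma deriv2_eqI:
  fixes f f' :: "real \<Rightarrow> real"
  assumes "\<And>s. (f has_real_derivative f' s) (at s)" "(f' has_real_derivative f'') (at t)"
  shows "deriv (deriv f) t = f''"
proof -
  have "deriv f = f'" using assms(1) by (auto intro: DERIV_imp_deriv)
  with assms(2) show ?thesis by (simp add: DERIV_imp_deriv)
qed

lemma deriv2_const_add_sums:
  assumes "\<And>j s. j < m \<Longrightarrow> (x j has_real_derivative x' j s) (at s)"
    and "\<And>j s. j < m \<Longrightarrow> (x' j has_real_derivative x'' j s) (at s)"
    and "\<And>j s. j < m \<Longrightarrow> (z j has_real_derivative z' j s) (at s)"
    and "\<And>j s. j < m \<Longrightarrow> (z' j has_real_derivative z'' j s) (at s)"
  shows "deriv (deriv (\<lambda>s. c + (\<Sum>j<m. a j * x j s) + (\<Sum>j<m. b j * z j s))) t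
    = (\<Sum>j<m. a j * x'' j t) + (\<Sum>j<m. b j * z'' j t)"
proof (rule deriv2_eqI[where f'="\<lambda>s. (\<Sum>j<m. a j * x' j s) + (\<Sum>j<m. b j * z' j s)"])
  fix s
  have "((\<lambda>s. c + (\<Sum>j<m. a j * x j s) + (\<Sum>j<m. b j * z j s)) has_real_derivative
      0 + (\<Sum>j<m. a j * x' j s) + (\<Sum>j<m. b j * z' j s)) (at s)"
    by (intro DERIV_add DERIV_const DERIV_sum DERIV_cmult assms(1,3)) auto
  then show "((\<lambda>s. c + (\<Sum>j<m. a j * x j s) + (\<Sum>j<m. b j * z j s)) has_real_derivative
      (\<Sum>j<m. a j * x' j s) + (\<Sum>j<m. b j * z' j s)) (at s)"
    by simp
qed (intro DERIV_add DERIV_sum DERIV_cmult assms(2,4); simp)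

lemma residual_eq:
  assumes "1 \<le> m" "k < n"
    and arn_p: "arnoldi n m A (\<lambda>k. g k - mat_vec n A u k) Vp vp Hp hp"
    and arn_s: "arnoldi n m A v Vs vs Hs hs"
    and ode_p: "solves2 m Hp (\<lambda>i. if i = 0 then vnorm n (\<lambda>k. g k - mat_vec n A u k) else 0)
                  up0 up1 up"
    and ode_s: "solves2 m Hs (\<lambda>i. 0) us0 us1 us"
    and y_def: "\<And>k t. y k t = u k + (\<Sum>j<m. Vp k j * up j t) + (\<Sum>j<m. Vs k j * us j t)"
    and r_def: "\<And>k t. r k t = - (\<Sum>l<n. A k l * y l t) + g k - deriv (deriv (y k)) t"
  shows "r k t = - hp * up (m - 1) t * vp k - hs * us (m - 1) t * vs k"
proof -
  define \<beta> where "\<beta> = vnorm n (\<lambda>k. g k - mat_vec n A u k)"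
  obtain up' where dp: "\<And>i s. i < m \<Longrightarrow> (up i has_real_derivative up' i s) (at s)"
    and ddp: "\<And>i s. i < m \<Longrightarrow>
      (up' i has_real_derivative - (\<Sum>j<m. Hp i j * up j s) + (if i = 0 then \<beta> else 0)) (at s)"
    using ode_p unfolding solves2_def \<beta>_def by blast
  obtain us' where ds: "\<And>i s. i < m \<Longrightarrow> (us i has_real_derivative us' i s) (at s)"
    and dds: "\<And>i s. i < m \<Longrightarrow> (us' i has_real_derivative - (\<Sum>j<m. Hs i j * us j s) + 0) (at s)"
    using ode_s unfolding solves2_def by blast
  define P where "P = (\<Sum>i<m. Vp k i * (\<Sum>j<m. Hp i j * up j t))"
  define S where "S = (\<Sum>i<m. Vs k i * (\<Sum>j<m. Hs i j * us j t))"
  have y_eq: "y k = (\<lambda>s. u k + (\<Sum>j<m. Vp k j * up j s) + (\<Sum>j<m. Vs k j * us j s))"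
    using y_def by auto
  have "deriv (deriv (y k)) t
      = (\<Sum>j<m. Vp k j * (- (\<Sum>i<m. Hp j i * up i t) + (if j = 0 then \<beta> else 0)))
        + (\<Sum>j<m. Vs k j * (- (\<Sum>i<m. Hs j i * us i t) + 0))"
    unfolding y_eq by (rule deriv2_const_add_sums[OF dp ddp ds dds])
  also have "\<dots> = - P + \<beta> * Vp k 0 - S"
  proof -
    have "(\<Sum>j<m. Vp k j * (if j = 0 then \<beta> else 0)) = (\<Sum>j<m. if j = 0 then \<beta> * Vp k j else 0)"
      by (rule sum.cong) auto
    then have "(\<Sum>j<m. Vp k j * (if j = 0 then \<beta> else 0)) = \<beta> * Vp k 0"
      using \<open>1 \<le> m\<close> by simp
    then show ?thesis
      by (simp only: P_def S_def distrib_left sum.distrib sum_negf mult_minus_right add_0_right)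
  qed
  also have "\<beta> * Vp k 0 = g k - mat_vec n A u k"
    unfolding \<beta>_def by (rule arnoldi_first_column[OF arn_p \<open>k < n\<close>])
  finally have "deriv (deriv (y k)) t = - P + (g k - mat_vec n A u k) - S" .
  moreover have "(\<Sum>l<n. A k l * y l t)
      = mat_vec n A u k + (P + hp * vp k * up (m - 1) t) + (S + hs * vs k * us (m - 1) t)"
    using arnoldi_relation_mult_vec[OF arn_p \<open>k < n\<close> \<open>1 \<le> m\<close>, of "\<lambda>j. up j t"]
      arnoldi_relation_mult_vec[OF arn_s \<open>k < n\<close> \<open>1 \<le> m\<close>, of "\<lambda>j. us j t"]
    by (simp add: y_def mat_vec_def P_def S_def distrib_left sum.distrib)
  ultimately show ?thesis by (simp add: r_def algebra_simps)
qed

lemma residual_norm_le: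
  assumes "1 \<le> m"
    and arn_p: "arnoldi n m A (\<lambda>k. g k - mat_vec n A u k) Vp vp Hp hp"
    and arn_s: "arnoldi n m A v Vs vs Hs hs"
    and ode_p: "solves2 m Hp (\<lambda>i. if i = 0 then vnorm n (\<lambda>k. g k - mat_vec n A u k) else 0)
                  (\<lambda>i. 0) (\<lambda>i. 0) up"
    and ode_s: "solves2 m Hs (\<lambda>i. 0) (\<lambda>i. 0) (\<lambda>i. if i = 0 then vnorm n v else 0) us"
    and y_def: "\<And>k t. y k t = u k + (\<Sum>j<m. Vp k j * up j t) + (\<Sum>j<m. Vs k j * us j t)"
    and r_def: "\<And>k t. r k t = - (\<Sum>l<n. A k l * y l t) + g k - deriv (deriv (y k)) t"
    and "0 \<le> t"
  shows "vnorm n (\<lambda>k. r k t)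
    \<le> hp * (vnorm n (\<lambda>k. g k - mat_vec n A u k) * (t * phi (- omega_hat m Hp * t)))
      + hs * (vnorm n v * (t * phi (- omega_hat m Hs * t)))"
proof -
  have hp: "0 \<le> hp" "vnorm n vp = 1" and hs: "0 \<le> hs" "vnorm n vs = 1"
    using arn_p arn_s unfolding arnoldi_def by auto
  have "vnorm n (\<lambda>k. r k t)
      = vnorm n (\<lambda>k. (- hp * up (m - 1) t) * vp k + (- hs * us (m - 1) t) * vs k)"
    using residual_eq[OF \<open>1 \<le> m\<close> _ arn_p arn_s ode_p ode_s y_def r_def] by (intro vnorm_cong) simp
  also have "\<dots> \<le> \<bar>- hp * up (m - 1) t\<bar> + \<bar>- hs * us (m - 1) t\<bar>"
    by (rule vnorm_lincomb_le[OF hp(2) hs(2)])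
  also have "\<dots> = hp * \<bar>up (m - 1) t\<bar> + hs * \<bar>us (m - 1) t\<bar>"
    using hp hs by (simp add: abs_mult)
  also have "\<dots> \<le> hp * (vnorm n (\<lambda>k. g k - mat_vec n A u k) * (t * phi (- omega_hat m Hp * t)))
      + hs * (vnorm n v * (t * phi (- omega_hat m Hs * t)))"
    using solves2_zero_init_bound[OF ode_p, of "vnorm n (\<lambda>k. g k - mat_vec n A u k)"]
      solves2_homogeneous_bound[OF ode_s] \<open>1 \<le> m\<close> \<open>0 \<le> t\<close> hp hs
    by (intro add_mono mult_left_mono) (auto simp: vnorm_unit_vector vnorm_nonneg)
  finally show ?thesis .
qed

theorem proposition2p2:
  fixes n m :: nat
    and A :: "nat \<Rightarrow> nat \<Rightarrow> real"
    and u v g :: "nat \<Rightarrow> real"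
    and Vp Vs Hp Hs :: "nat \<Rightarrow> nat \<Rightarrow> real"
    and vp vs :: "nat \<Rightarrow> real"
    and hp hs :: real
    and up us :: "nat \<Rightarrow> real \<Rightarrow> real"
    and y r :: "nat \<Rightarrow> real \<Rightarrow> real"
  assumes m_pos: "m \<ge> 1"
    and res_nz: "\<exists>k<n. g k - mat_vec n A u k \<noteq> 0"
    and v_nz: "\<exists>k<n. v k \<noteq> 0"
    and arn_p: "arnoldi n m A (\<lambda>k. g k - mat_vec n A u k) Vp vp Hp hp"
    and arn_s: "arnoldi n m A v Vs vs Hs hs"
    and ode_p: "solves2 m Hp (\<lambda>i. if i = 0 then vnorm n (\<lambda>k. g k - mat_vec n A u k) else 0)
                  (\<lambda>i. 0) (\<lambda>i. 0) up"
    and ode_s: "solves2 m Hs (\<lambda>i. 0) (\<lambda>i. 0) (\<lambda>i. if i = 0 then vnorm n v else 0) us"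
    and y_def: "\<And>k t. y k t = u k + (\<Sum>j<m. Vp k j * up j t) + (\<Sum>j<m. Vs k j * us j t)"
    and r_def: "\<And>k t. r k t = - (\<Sum>l<n. A k l * y l t) + g k - deriv (deriv (y k)) t"
  shows "(\<forall>t\<ge>0.
           let wp = - (1/2) * opnorm m m (\<lambda>i j. Hp i j - idmat i j);
               ws = - (1/2) * opnorm m m (\<lambda>i j. Hs i j - idmat i j);
               w = min wp ws;
               beta = vnorm n (\<lambda>k. g k - mat_vec n A u k)
           in vnorm n (\<lambda>k. r k t)
                \<le> hp * t * phi (- t * wp) * beta + hs * t * phi (- t * ws) * vnorm n v
            \<and> hp * t * phi (- t * wp) * beta + hs * t * phi (- t * ws) * vnorm n v
                \<le> t * phi (- t * w) * (hp * beta + hs * vnorm n v))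
       \<and> (\<forall>\<epsilon>>0. \<exists>\<delta>>0. \<forall>t\<in>{0..\<delta>}. vnorm n (\<lambda>k. r k t) \<le> \<epsilon>)"
proof -
  define \<beta> where "\<beta> = vnorm n (\<lambda>k. g k - mat_vec n A u k)"
  note bound = residual_norm_le[OF m_pos arn_p arn_s ode_p ode_s y_def r_def, folded \<beta>_def]
  have weights: "0 \<le> hp * \<beta>" "0 \<le> hs * vnorm n v"
    using arn_p arn_s by (simp_all add: arnoldi_def \<beta>_def vnorm_nonneg)
  have small: "\<forall>\<epsilon>>0. \<exists>\<delta>>0. \<forall>t\<in>{0..\<delta>}. vnorm n (\<lambda>k. r k t) \<le> \<epsilon>"
  proof (rule small_near_zero_if_le_t_phi)
    show "vnorm n (\<lambda>k. r k t) \<le> t * phi (- min (omega_hat m Hp) (omega_hat m Hs) * t)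
        * (hp * \<beta> + hs * vnorm n v)" if "0 \<le> t" for t
      using bound[OF that] t_phi_weighted_sum_le[OF weights that, of "omega_hat m Hp" "omega_hat m Hs"]
      by (simp add: ac_simps)
  qed (use weights omega_hat_nonpos[of m Hp] in simp_all)
  show ?thesis
    unfolding Let_def omega_hat_def[symmetric] \<beta>_def[symmetric]
  proof (rule conjI[OF _ small], intro allI impI conjI)
    fix t :: real assume "0 \<le> t"
    show "vnorm n (\<lambda>k. r k t)
        \<le> hp * t * phi (- t * omega_hat m Hp) * \<beta> + hs * t * phi (- t * omega_hat m Hs) * vnorm n v"
      using bound[OF \<open>0 \<le> t\<close>] by (simp add: ac_simps)
    show "hp * t * phi (- t * omega_hat m Hp) * \<beta> + hs * t * phi (- t * omega_hat m Hs) * vnorm n v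
        \<le> t * phi (- t * min (omega_hat m Hp) (omega_hat m Hs)) * (hp * \<beta> + hs * vnorm n v)"
      using t_phi_weighted_sum_le[OF weights \<open>0 \<le> t\<close>, of "omega_hat m Hp" "omega_hat m Hs"]
      by (simp add: ac_simps)
  qed
qed

end
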